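(* Assume $H_0$ satisfies TQO-2. Let $A\in\mathcal{S}(r)$ be any square with $r\le L^*$ and let $O_A$ be any operator acting on $A$ such that $O_AP=0$. Let $B\in\mathcal{S}(r+2)$ be the square that contains $A$ and all nearest neighbors of $A$. Then $O_AP_B=0$.
   Context: Let $\Lambda=\mathbb{Z}_L\times\mathbb{Z}_L$ (periodic boundary conditions), each site $u$ carrying a finite-dimensional Hilbert space $\mathcal{H}_u$, $\mathcal{H}=\bigotimes_u\mathcal{H}_u$. For $r\ge1$, $\mathcal{S}(r)$ is the set of all $r\times r$ square blocks of sites. An operator acts on $A$ if it is the identity outside $A$. $H_0=\sum_{A\in\mathcal{S}(2)}G_A$ with each $G_A$ acting on $A$, the $G_A$ pairwise commuting, $G_A\ge0$, $G_A^2\ge G_A$, and frustration-free: the ground subspace $P=\{\psi:G_A\psi=0\ \forall A\in\mathcal{S}(2)\}$ is nonzero; $P$ also denotes its orthogonal projector. $P_A$ is the projector onto the kernel of $G_A$, and for a square $B$, $P_B=\prod_{A\in\mathcal{S}(2),A\subseteq B}P_A$. There is a constant $c>0$ and an integer $L^*\ge cL$. TQO-2: for every square $A\in\mathcal{S}(r)$, $r\le L^*$, with $B\in\mathcal{S}(r+2)$ the square containing $A$ and all its nearest neighbors, the operators $\mathrm{Tr}_{\Lambda\setminus A}(P)$ and $\mathrm{Tr}_{\Lambda\setminus A}(P_B)$ have the same kernel. *)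

theory Defs
  imports Complex_Main
begin

text \<open>Sites of the torus Z_L x Z_L are pairs of integers with coordinates in [0,L).
  A basis configuration assigns to each site u an index < d u (d u = dim H_u), and 0 to
  sites outside the region under consideration. Vectors and operators on a region are
  functions on configurations (resp. pairs of configurations) of that region.\<close>

type_synonym site = "int \<times> int"
type_synonym cfg = "site \<Rightarrow> nat"
type_synonym vec = "cfg \<Rightarrow> complex"
type_synonym op = "cfg \<Rightarrow> cfg \<Rightarrow> complex"

definition lattice :: "nat \<Rightarrow> site set" where
  "lattice L = {0..<int L} \<times> {0..<int L}"

definition square :: "nat \<Rightarrow> int \<Rightarrow> int \<Rightarrow> nat \<Rightarrow> site set" where
  "square L x y r = {((x + i) mod int L, (y + j) mod int L) | i j.
      0 \<le> i \<and> i < int r \<and> 0 \<le> j \<and> j < int r}"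

definition squares :: "nat \<Rightarrow> nat \<Rightarrow> site set set" where
  "squares L r = {square L x y r | x y. True}"

definition confs :: "(site \<Rightarrow> nat) \<Rightarrow> site set \<Rightarrow> cfg set" where
  "confs d S = {c. (\<forall>u\<in>S. c u < d u) \<and> (\<forall>u. u \<notin> S \<longrightarrow> c u = 0)}"

abbreviation C :: "nat \<Rightarrow> (site \<Rightarrow> nat) \<Rightarrow> cfg set" where
  "C L d \<equiv> confs d (lattice L)"

definition vspace :: "nat \<Rightarrow> (site \<Rightarrow> nat) \<Rightarrow> vec set" where
  "vspace L d = {v. \<forall>c. c \<notin> C L d \<longrightarrow> v c = 0}"

definition op_mult :: "nat \<Rightarrow> (site \<Rightarrow> nat) \<Rightarrow> op \<Rightarrow> op \<Rightarrow> op" where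
  "op_mult L d X Y = (\<lambda>c c'. if c \<in> C L d \<and> c' \<in> C L d
      then \<Sum>e\<in>C L d. X c e * Y e c' else 0)"

definition op_app :: "nat \<Rightarrow> (site \<Rightarrow> nat) \<Rightarrow> op \<Rightarrow> vec \<Rightarrow> vec" where
  "op_app L d X v = (\<lambda>c. if c \<in> C L d then \<Sum>e\<in>C L d. X c e * v e else 0)"

definition op_id :: "nat \<Rightarrow> (site \<Rightarrow> nat) \<Rightarrow> op" where
  "op_id L d = (\<lambda>c c'. if c \<in> C L d \<and> c = c' then 1 else 0)"

definition inner :: "nat \<Rightarrow> (site \<Rightarrow> nat) \<Rightarrow> vec \<Rightarrow> vec \<Rightarrow> complex" where
  "inner L d v w = (\<Sum>c\<in>C L d. cnj (v c) * w c)"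

definition hermitian :: "nat \<Rightarrow> (site \<Rightarrow> nat) \<Rightarrow> op \<Rightarrow> bool" where
  "hermitian L d X \<longleftrightarrow> (\<forall>c\<in>C L d. \<forall>c'\<in>C L d. X c' c = cnj (X c c'))"

definition psd :: "nat \<Rightarrow> (site \<Rightarrow> nat) \<Rightarrow> op \<Rightarrow> bool" where
  "psd L d X \<longleftrightarrow> hermitian L d X \<and>
     (\<forall>v\<in>vspace L d. 0 \<le> Re (inner L d v (op_app L d X v)))"

definition op_le :: "nat \<Rightarrow> (site \<Rightarrow> nat) \<Rightarrow> op \<Rightarrow> op \<Rightarrow> bool" where
  "op_le L d X Y \<longleftrightarrow> psd L d (\<lambda>c c'. Y c c' - X c c')"

definition restr :: "cfg \<Rightarrow> site set \<Rightarrow> cfg" where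
  "restr c A = (\<lambda>u. if u \<in> A then c u else 0)"

text \<open>X acts on A: X = X_A \<otimes> id on the complement of A.\<close>
definition acts_on :: "nat \<Rightarrow> (site \<Rightarrow> nat) \<Rightarrow> site set \<Rightarrow> op \<Rightarrow> bool" where
  "acts_on L d A X \<longleftrightarrow> (\<exists>f. \<forall>c\<in>C L d. \<forall>c'\<in>C L d.
      X c c' = (if \<forall>u\<in>lattice L - A. c u = c' u then f (restr c A) (restr c' A) else 0))"

definition is_orth_proj :: "nat \<Rightarrow> (site \<Rightarrow> nat) \<Rightarrow> op \<Rightarrow> vec set \<Rightarrow> bool" where
  "is_orth_proj L d Pm V \<longleftrightarrow>
     (\<forall>c c'. \<not> (c \<in> C L d \<and> c' \<in> C L d) \<longrightarrow> Pm c c' = 0) \<and>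
     (\<forall>v\<in>vspace L d. op_app L d Pm v \<in> V \<and>
        (\<forall>w\<in>V. inner L d w (\<lambda>c. v c - op_app L d Pm v c) = 0))"

definition orth_proj :: "nat \<Rightarrow> (site \<Rightarrow> nat) \<Rightarrow> vec set \<Rightarrow> op" where
  "orth_proj L d V = (THE Pm. is_orth_proj L d Pm V)"

definition op_kernel :: "nat \<Rightarrow> (site \<Rightarrow> nat) \<Rightarrow> op \<Rightarrow> vec set" where
  "op_kernel L d X = {v \<in> vspace L d. op_app L d X v = (\<lambda>_. 0)}"

definition ground :: "nat \<Rightarrow> (site \<Rightarrow> nat) \<Rightarrow> (site set \<Rightarrow> op) \<Rightarrow> vec set" where
  "ground L d G = {v \<in> vspace L d. \<forall>A\<in>squares L 2. op_app L d (G A) v = (\<lambda>_. 0)}"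

definition Pgs :: "nat \<Rightarrow> (site \<Rightarrow> nat) \<Rightarrow> (site set \<Rightarrow> op) \<Rightarrow> op" where
  "Pgs L d G = orth_proj L d (ground L d G)"

definition Ploc :: "nat \<Rightarrow> (site \<Rightarrow> nat) \<Rightarrow> (site set \<Rightarrow> op) \<Rightarrow> site set \<Rightarrow> op" where
  "Ploc L d G A = orth_proj L d (op_kernel L d (G A))"

text \<open>Product of a family of operators over a finite set (in some enumeration; for
  commuting factors, as here, the order is irrelevant).\<close>
definition op_prod :: "nat \<Rightarrow> (site \<Rightarrow> nat) \<Rightarrow> ('a \<Rightarrow> op) \<Rightarrow> 'a set \<Rightarrow> op" where
  "op_prod L d F S = foldr (op_mult L d) (map F (SOME xs. distinct xs \<and> set xs = S)) (op_id L d)"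

definition PB :: "nat \<Rightarrow> (site \<Rightarrow> nat) \<Rightarrow> (site set \<Rightarrow> op) \<Rightarrow> site set \<Rightarrow> op" where
  "PB L d G B = op_prod L d (Ploc L d G) {A \<in> squares L 2. A \<subseteq> B}"

definition merge :: "site set \<Rightarrow> cfg \<Rightarrow> cfg \<Rightarrow> cfg" where
  "merge A a e = (\<lambda>u. if u \<in> A then a u else e u)"

definition ptrace :: "nat \<Rightarrow> (site \<Rightarrow> nat) \<Rightarrow> site set \<Rightarrow> op \<Rightarrow> op" where
  "ptrace L d A X = (\<lambda>a a'. if a \<in> confs d A \<and> a' \<in> confs d A
      then \<Sum>e\<in>confs d (lattice L - A). X (merge A a e) (merge A a' e) else 0)"

definition loc_kernel :: "(site \<Rightarrow> nat) \<Rightarrow> site set \<Rightarrow> op \<Rightarrow> vec set" where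
  "loc_kernel d A T = {v. (\<forall>a. a \<notin> confs d A \<longrightarrow> v a = 0) \<and>
      (\<forall>a\<in>confs d A. (\<Sum>a'\<in>confs d A. T a a' * v a') = 0)}"

text \<open>Standing assumptions on H_0 = sum of G_A.\<close>
definition H0_assms :: "nat \<Rightarrow> (site \<Rightarrow> nat) \<Rightarrow> (site set \<Rightarrow> op) \<Rightarrow> bool" where
  "H0_assms L d G \<longleftrightarrow>
     (\<forall>A\<in>squares L 2. acts_on L d A (G A)) \<and>
     (\<forall>A\<in>squares L 2. \<forall>A'\<in>squares L 2. op_mult L d (G A) (G A') = op_mult L d (G A') (G A)) \<and>
     (\<forall>A\<in>squares L 2. psd L d (G A)) \<and>
     (\<forall>A\<in>squares L 2. op_le L d (G A) (op_mult L d (G A) (G A))) \<and>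
     (\<exists>v\<in>ground L d G. v \<noteq> (\<lambda>_. 0))"

definition TQO2 :: "nat \<Rightarrow> (site \<Rightarrow> nat) \<Rightarrow> (site set \<Rightarrow> op) \<Rightarrow> nat \<Rightarrow> bool" where
  "TQO2 L d G Lstar \<longleftrightarrow> (\<forall>r x y. 1 \<le> r \<and> r \<le> Lstar \<longrightarrow>
     loc_kernel d (square L x y r) (ptrace L d (square L x y r) (Pgs L d G)) =
     loc_kernel d (square L x y r)
        (ptrace L d (square L x y r) (PB L d G (square L (x - 1) (y - 1) (r + 2)))))"

end

theory Submission
  imports Defs "HOL-Library.FuncSet"
begin

text \<open>Write O_A = f \<otimes> 1. For Hermitian X, O_A X = 0 iff X O_A^* = 0, and because O_A acts on
  A, Tr_{\<Lambda>\A}(X O_A^*) = Tr_{\<Lambda>\A}(X) f^*. Hence O_A P = 0 puts the columns of f^* into the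
  kernel of Tr_{\<Lambda>\A}(P), which by TQO-2 is the kernel of Tr_{\<Lambda>\A}(P_B). Conversely, P_B is a
  product of commuting orthogonal projectors and thus itself one, Q say; the squared norms of
  Q O_A^* e_c, summed over the configurations c with a fixed restriction to A, form a diagonal
  entry of f Tr_{\<Lambda>\A}(Q) f^*, which now vanishes. So Q O_A^* = 0, i.e. O_A P_B = 0.\<close>

section \<open>Configurations and operators as matrices\<close>

lemma confs_outside: "c \<in> confs d S \<Longrightarrow> u \<notin> S \<Longrightarrow> c u = 0"
  unfolding confs_def by blast

lemma finite_confs:
  assumes "finite S"
  shows "finite (confs d S)"
proof -
  have "inj_on (\<lambda>c. restrict c S) (confs d S)"
  proof (rule inj_onI)
    fix c c' assume c: "c \<in> confs d S" and c': "c' \<in> confs d S"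
      and eq: "restrict c S = restrict c' S"
    show "c = c'"
    proof
      fix u
      show "c u = c' u"
        using fun_cong[OF eq, of u] confs_outside[OF c, of u] confs_outside[OF c', of u]
        by (cases "u \<in> S") auto
    qed
  qed
  moreover have "(\<lambda>c. restrict c S) ` confs d S \<subseteq> PiE S (\<lambda>u. {..<d u})"
    by (auto simp: confs_def)
  hence "finite ((\<lambda>c. restrict c S) ` confs d S)"
    using finite_PiE[OF assms, of "\<lambda>u. {..<d u}"] finite_subset by blast
  ultimately show ?thesis
    using finite_imageD by blast
qed

lemma finite_lattice: "finite (lattice L)"
  by (simp add: lattice_def)

lemma finite_lattice_confs: "finite (C L d)"
  by (simp add: finite_confs finite_lattice)

lemma square_subset_lattice: "0 < L \<Longrightarrow> square L x y r \<subseteq> lattice L"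
  by (auto simp: square_def lattice_def)

definition basis_vec :: "cfg \<Rightarrow> vec" where
  "basis_vec c0 = (\<lambda>c. if c = c0 then 1 else 0)"

definition op_zero_outside :: "nat \<Rightarrow> (site \<Rightarrow> nat) \<Rightarrow> op \<Rightarrow> bool" where
  "op_zero_outside L d X \<longleftrightarrow> (\<forall>c c'. \<not> (c \<in> C L d \<and> c' \<in> C L d) \<longrightarrow> X c c' = 0)"

definition op_adj :: "op \<Rightarrow> op" where
  "op_adj X = (\<lambda>c c'. cnj (X c' c))"

lemma op_app_basis_vec:
  "c' \<in> C L d \<Longrightarrow> op_app L d X (basis_vec c') c = (if c \<in> C L d then X c c' else 0)"
  by (simp add: op_app_def basis_vec_def if_distrib finite_lattice_confs cong: if_cong)

lemma basis_vec_in_vspace: "c' \<in> C L d \<Longrightarrow> basis_vec c' \<in> vspace L d"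
  by (auto simp: vspace_def basis_vec_def)

lemma op_app_in_vspace: "op_app L d X v \<in> vspace L d"
  by (simp add: vspace_def op_app_def)

lemma vspace_outside: "v \<in> vspace L d \<Longrightarrow> c \<notin> C L d \<Longrightarrow> v c = 0"
  by (simp add: vspace_def)

lemma op_app_add: "op_app L d X (\<lambda>c. v c + w c) = (\<lambda>c. op_app L d X v c + op_app L d X w c)"
  by (auto simp: op_app_def distrib_left sum.distrib)

lemma op_app_scale: "op_app L d X (\<lambda>c. a * v c) = (\<lambda>c. a * op_app L d X v c)"
  by (auto simp: op_app_def sum_distrib_left mult.left_commute)

lemma op_app_zero: "op_app L d X (\<lambda>_. 0) = (\<lambda>_. 0)"
  by (auto simp: op_app_def)

lemma op_app_op_mult: "op_app L d (op_mult L d X Y) v = op_app L d X (op_app L d Y v)"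
proof
  fix c
  show "op_app L d (op_mult L d X Y) v c = op_app L d X (op_app L d Y v) c"
  proof (cases "c \<in> C L d")
    case True
    have "op_app L d (op_mult L d X Y) v c = (\<Sum>e\<in>C L d. \<Sum>f\<in>C L d. X c f * Y f e * v e)"
      using True by (simp add: op_app_def op_mult_def sum_distrib_right)
    also have "\<dots> = (\<Sum>f\<in>C L d. \<Sum>e\<in>C L d. X c f * Y f e * v e)"
      by (rule sum.swap)
    also have "\<dots> = op_app L d X (op_app L d Y v) c"
      using True by (simp add: op_app_def sum_distrib_left mult.assoc)
    finally show ?thesis .
  qed (simp add: op_app_def)
qed

lemma op_mult_assoc: "op_mult L d (op_mult L d X Y) Z = op_mult L d X (op_mult L d Y Z)"
proof (intro ext)
  fix c c'
  show "op_mult L d (op_mult L d X Y) Z c c' = op_mult L d X (op_mult L d Y Z) c c'"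
  proof (cases "c \<in> C L d \<and> c' \<in> C L d")
    case True
    have "op_mult L d (op_mult L d X Y) Z c c' = (\<Sum>e\<in>C L d. \<Sum>f\<in>C L d. X c f * Y f e * Z e c')"
      using True by (simp add: op_mult_def sum_distrib_right)
    also have "\<dots> = (\<Sum>f\<in>C L d. \<Sum>e\<in>C L d. X c f * Y f e * Z e c')"
      by (rule sum.swap)
    also have "\<dots> = op_mult L d X (op_mult L d Y Z) c c'"
      using True by (simp add: op_mult_def sum_distrib_left mult.assoc)
    finally show ?thesis .
  qed (auto simp: op_mult_def)
qed

lemma op_zero_outside_op_mult: "op_zero_outside L d (op_mult L d X Y)"
  by (simp add: op_zero_outside_def op_mult_def)

lemma op_zero_outside_op_id: "op_zero_outside L d (op_id L d)"
  by (simp add: op_zero_outside_def op_id_def)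

lemma op_mult_id_right: "op_zero_outside L d X \<Longrightarrow> op_mult L d X (op_id L d) = X"
  by (intro ext)
    (auto simp: op_zero_outside_def op_mult_def op_id_def if_distrib finite_lattice_confs
      cong: if_cong)

lemma op_mult_id_left: "op_zero_outside L d X \<Longrightarrow> op_mult L d (op_id L d) X = X"
  by (intro ext)
    (auto simp: op_zero_outside_def op_mult_def op_id_def finite_lattice_confs
      if_distrib[of "\<lambda>z. z * _"] cong: if_cong)

lemma op_eqI_basis_vec:
  assumes "op_zero_outside L d X" "op_zero_outside L d Y"
    and "\<And>c'. c' \<in> C L d \<Longrightarrow> op_app L d X (basis_vec c') = op_app L d Y (basis_vec c')"
  shows "X = Y"
proof (intro ext)
  fix c c'
  show "X c c' = Y c c'"
  proof (cases "c \<in> C L d \<and> c' \<in> C L d")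
    case True
    then show ?thesis
      using fun_cong[OF assms(3), of c' c] by (simp add: op_app_basis_vec)
  qed (use assms(1,2) in \<open>simp add: op_zero_outside_def\<close>)
qed

lemma op_mult_eq_cnj_op_mult_adj:
  assumes "hermitian L d X" "c \<in> C L d" "c' \<in> C L d"
  shows "op_mult L d Y X c c' = cnj (op_mult L d X (op_adj Y) c' c)"
proof -
  have "X e c' = cnj (X c' e)" if "e \<in> C L d" for e
    using assms that unfolding hermitian_def by blast
  then show ?thesis
    using assms(2,3) by (simp add: op_mult_def op_adj_def mult.commute)
qed

lemma hermitian_op_mult_eq_0_iff_adj:
  assumes "hermitian L d X"
  shows "op_mult L d Y X = (\<lambda>_ _. 0) \<longleftrightarrow> op_mult L d X (op_adj Y) = (\<lambda>_ _. 0)"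
proof -
  have "op_mult L d Y X c c' = 0 \<longleftrightarrow> op_mult L d X (op_adj Y) c' c = 0"
    if "c \<in> C L d \<and> c' \<in> C L d" for c c'
    using op_mult_eq_cnj_op_mult_adj[OF assms] that by simp
  moreover have "op_mult L d Y X c c' = 0 \<and> op_mult L d X (op_adj Y) c' c = 0"
    if "\<not> (c \<in> C L d \<and> c' \<in> C L d)" for c c'
    using that by (auto simp: op_mult_def)
  ultimately show ?thesis
    unfolding fun_eq_iff by blast
qed

section \<open>Inner product and subspaces\<close>

definition csubspace :: "nat \<Rightarrow> (site \<Rightarrow> nat) \<Rightarrow> vec set \<Rightarrow> bool" where
  "csubspace L d V \<longleftrightarrow> (\<lambda>_. 0) \<in> V \<and> (\<forall>v\<in>V. \<forall>w\<in>V. (\<lambda>c. v c + w c) \<in> V) \<and>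
     (\<forall>a. \<forall>v\<in>V. (\<lambda>c. a * v c) \<in> V) \<and> V \<subseteq> vspace L d"

lemma csubspace_zero: "csubspace L d V \<Longrightarrow> (\<lambda>_. 0) \<in> V"
  by (simp add: csubspace_def)

lemma csubspace_add: "csubspace L d V \<Longrightarrow> v \<in> V \<Longrightarrow> w \<in> V \<Longrightarrow> (\<lambda>c. v c + w c) \<in> V"
  by (simp add: csubspace_def)

lemma csubspace_scale: "csubspace L d V \<Longrightarrow> v \<in> V \<Longrightarrow> (\<lambda>c. a * v c) \<in> V"
  by (simp add: csubspace_def)

lemma csubspace_vspace: "csubspace L d V \<Longrightarrow> v \<in> V \<Longrightarrow> v \<in> vspace L d"
  by (auto simp: csubspace_def)

lemma csubspace_diff:
  assumes V: "csubspace L d V" and "v \<in> V" "w \<in> V"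
  shows "(\<lambda>c. v c - w c) \<in> V"
  using csubspace_add[OF V \<open>v \<in> V\<close> csubspace_scale[OF V \<open>w \<in> V\<close>, of "-1"]] by simp

lemma csubspace_sum:
  assumes V: "csubspace L d V" and "finite I" and "\<forall>i\<in>I. f i \<in> V"
  shows "(\<lambda>c. \<Sum>i\<in>I. a i * f i c) \<in> V"
  using assms(2,3)
proof (induction I rule: finite_induct)
  case empty
  then show ?case using csubspace_zero[OF V] by simp
next
  case (insert x F)
  have "(\<lambda>c. a x * f x c) \<in> V" using insert csubspace_scale[OF V] by auto
  from csubspace_add[OF V this insert.IH] insert show ?case by simp
qed

lemma csubspace_op_kernel: "csubspace L d (op_kernel L d X)"
  unfolding csubspace_def op_kernel_def
  by (auto simp: op_app_zero op_app_add op_app_scale vspace_def)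

lemma csubspace_ground: "csubspace L d (ground L d G)"
  unfolding csubspace_def ground_def
  by (auto simp: op_app_zero op_app_add op_app_scale vspace_def)

lemma inner_diff_right: "inner L d u (\<lambda>c. v c - w c) = inner L d u v - inner L d u w"
  by (simp add: inner_def right_diff_distrib sum_subtractf)

lemma inner_scale_right: "inner L d u (\<lambda>c. a * v c) = a * inner L d u v"
  by (simp add: inner_def sum_distrib_left mult.left_commute)

lemma inner_scale_left: "inner L d (\<lambda>c. a * v c) w = cnj a * inner L d v w"
  by (simp add: inner_def sum_distrib_left mult.assoc)

lemma inner_commute: "inner L d w v = cnj (inner L d v w)"
  by (simp add: inner_def mult.commute)

lemma inner_sum_right:
  "inner L d u (\<lambda>c. \<Sum>i\<in>I. a i * f i c) = (\<Sum>i\<in>I. a i * inner L d u (f i))"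
proof -
  have "inner L d u (\<lambda>c. \<Sum>i\<in>I. a i * f i c) = (\<Sum>c\<in>C L d. \<Sum>i\<in>I. a i * (cnj (u c) * f i c))"
    by (simp add: inner_def sum_distrib_left mult.left_commute)
  also have "\<dots> = (\<Sum>i\<in>I. \<Sum>c\<in>C L d. a i * (cnj (u c) * f i c))"
    by (rule sum.swap)
  also have "\<dots> = (\<Sum>i\<in>I. a i * inner L d u (f i))"
    by (simp add: inner_def sum_distrib_left)
  finally show ?thesis .
qed

lemma inner_sum_left:
  "inner L d (\<lambda>c. \<Sum>i\<in>I. a i * f i c) v = (\<Sum>i\<in>I. cnj (a i) * inner L d (f i) v)"
  by (subst inner_commute) (simp add: inner_sum_right, metis inner_commute)

lemma inner_self: "inner L d v v = of_real (\<Sum>c\<in>C L d. (cmod (v c))\<^sup>2)"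
  unfolding inner_def of_real_sum
  by (rule sum.cong) (simp_all only: complex_norm_square mult.commute)

lemma inner_self_eq_0_imp:
  assumes "inner L d v v = 0" "c \<in> C L d"
  shows "v c = 0"
proof -
  have "(\<Sum>c\<in>C L d. (cmod (v c))\<^sup>2) = 0"
    using assms(1) by (simp only: inner_self of_real_eq_0_iff)
  hence "\<forall>c\<in>C L d. (cmod (v c))\<^sup>2 = 0"
    by (simp add: sum_nonneg_eq_0_iff finite_lattice_confs)
  thus ?thesis using assms(2) by simp
qed

lemma inner_self_eq_0_vspace: "inner L d v v = 0 \<Longrightarrow> v \<in> vspace L d \<Longrightarrow> v = (\<lambda>_. 0)"
  by (rule ext) (metis inner_self_eq_0_imp vspace_outside)

lemma inner_basis_vec_left: "c \<in> C L d \<Longrightarrow> inner L d (basis_vec c) v = v c"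
  by (simp add: inner_def basis_vec_def finite_lattice_confs if_distrib[of "\<lambda>z. cnj z * _"]
      cong: if_cong)

lemma inner_basis_vec_right: "c \<in> C L d \<Longrightarrow> inner L d v (basis_vec c) = cnj (v c)"
  by (simp add: inner_def basis_vec_def finite_lattice_confs if_distrib[of "\<lambda>z. _ * z"]
      cong: if_cong)

lemma hermitian_inner_op_app:
  assumes "hermitian L d X"
  shows "inner L d w (op_app L d X v) = inner L d (op_app L d X w) v"
proof -
  have "inner L d w (op_app L d X v) = (\<Sum>c\<in>C L d. \<Sum>e\<in>C L d. cnj (w c) * X c e * v e)"
    by (simp add: inner_def op_app_def sum_distrib_left mult.assoc)
  also have "\<dots> = (\<Sum>e\<in>C L d. \<Sum>c\<in>C L d. cnj (w c) * X c e * v e)"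
    by (rule sum.swap)
  also have "\<dots> = (\<Sum>e\<in>C L d. \<Sum>c\<in>C L d. cnj (X e c * w c) * v e)"
  proof (intro sum.cong refl)
    fix e c assume "e \<in> C L d" "c \<in> C L d"
    then have "X c e = cnj (X e c)"
      using assms unfolding hermitian_def by blast
    then show "cnj (w c) * X c e * v e = cnj (X e c * w c) * v e"
      by (simp only: complex_cnj_mult mult.commute)
  qed
  also have "\<dots> = inner L d (op_app L d X w) v"
    by (simp add: inner_def op_app_def sum_distrib_right)
  finally show ?thesis .
qed

section \<open>Orthonormal bases and orthogonal projectors\<close>

definition orthonormal_list :: "nat \<Rightarrow> (site \<Rightarrow> nat) \<Rightarrow> vec list \<Rightarrow> bool" where
  "orthonormal_list L d es \<longleftrightarrow>
     (\<forall>i<length es. \<forall>j<length es. inner L d (es!i) (es!j) = (if i = j then 1 else 0))"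

definition expansion :: "nat \<Rightarrow> (site \<Rightarrow> nat) \<Rightarrow> vec list \<Rightarrow> vec \<Rightarrow> vec" where
  "expansion L d es v = (\<lambda>c. \<Sum>i<length es. inner L d (es!i) v * (es!i) c)"

lemma orthonormal_list_inner_combination:
  assumes "orthonormal_list L d es" "j < length es"
  shows "inner L d (es!j) (\<lambda>c. \<Sum>i<length es. a i * (es!i) c) = a j"
proof -
  have "(\<Sum>i<length es. a i * inner L d (es!j) (es!i)) = (\<Sum>i<length es. if i = j then a i else 0)"
    using assms unfolding orthonormal_list_def by (intro sum.cong) auto
  thus ?thesis using assms(2) by (simp add: inner_sum_right)
qed

lemma orthonormal_list_combination_eq_expansion:
  assumes "orthonormal_list L d es" "v = (\<lambda>c. \<Sum>i<length es. a i * (es!i) c)"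
  shows "v = expansion L d es v"
  unfolding expansion_def
  using orthonormal_list_inner_combination[OF assms(1)] assms(2)
  by (subst assms(2)) (intro ext sum.cong, auto)

lemma expansion_in_csubspace:
  assumes "csubspace L d V" "set es \<subseteq> V"
  shows "expansion L d es v \<in> V"
  unfolding expansion_def using assms
  by (intro csubspace_sum) (auto simp: nth_mem subset_iff)

lemma expansion_diff:
  "expansion L d es (\<lambda>c. v c - w c) = (\<lambda>c. expansion L d es v c - expansion L d es w c)"
  by (simp add: expansion_def inner_diff_right algebra_simps sum_subtractf)

lemma expansion_scale:
  "expansion L d es (\<lambda>c. a * v c) = (\<lambda>c. a * expansion L d es v c)"
  by (simp add: expansion_def inner_scale_right sum_distrib_left mult.assoc)

lemma orthonormal_list_snoc:
  assumes "orthonormal_list L d es" "\<forall>i<length es. inner L d (es!i) e = 0" "inner L d e e = 1"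
  shows "orthonormal_list L d (es @ [e])"
  unfolding orthonormal_list_def
proof (intro allI impI)
  fix i j assume "i < length (es @ [e])" "j < length (es @ [e])"
  moreover have "inner L d e (es!i) = 0" if "i < length es" for i
    using assms(2) that inner_commute by (metis complex_cnj_zero)
  ultimately show "inner L d ((es @ [e]) ! i) ((es @ [e]) ! j) = (if i = j then 1 else 0)"
    using assms(1,2,3) unfolding orthonormal_list_def
    by (cases "i < length es"; cases "j < length es") (auto simp: nth_append)
qed

lemma expansion_snoc_eq:
  assumes "orthonormal_list L d (es @ [e])" "v = (\<lambda>c. expansion L d es v c + a * e c)"
  shows "v = expansion L d (es @ [e]) v"
proof (rule orthonormal_list_combination_eq_expansion[OF assms(1)])
  let ?b = "\<lambda>i. if i < length es then inner L d (es!i) v else a"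
  show "v = (\<lambda>c. \<Sum>i<length (es @ [e]). ?b i * ((es @ [e]) ! i) c)"
    by (subst assms(2)) (simp add: expansion_def nth_append)
qed

lemma normalized_multiple_exists:
  assumes "c \<in> C L d" "r c \<noteq> 0"
  shows "\<exists>k. k \<noteq> 0 \<and> inner L d (\<lambda>c. k * r c) (\<lambda>c. k * r c) = 1"
proof -
  define t where "t = (\<Sum>c\<in>C L d. (cmod (r c))\<^sup>2)"
  have "(cmod (r c))\<^sup>2 \<le> t"
    unfolding t_def by (rule member_le_sum[OF assms(1)]) (simp_all add: finite_lattice_confs)
  moreover have "(cmod (r c))\<^sup>2 > 0" using assms(2) by simp
  ultimately have "t > 0" by linarith
  define k where "k = complex_of_real (1 / sqrt t)"
  have "inner L d (\<lambda>c. k * r c) (\<lambda>c. k * r c) = cnj k * (k * of_real t)"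
    by (simp add: inner_scale_left inner_scale_right inner_self t_def)
  also have "\<dots> = of_real ((1 / sqrt t) * ((1 / sqrt t) * t))"
    by (simp only: k_def complex_cnj_complex_of_real of_real_mult)
  also have "(1 / sqrt t) * ((1 / sqrt t) * t) = 1"
    using \<open>t > 0\<close> by (simp add: field_simps flip: power2_eq_square)
  finally show ?thesis
    using \<open>t > 0\<close> by (intro exI[of _ k]) (simp add: k_def)
qed

text \<open>The Gram--Schmidt step: an orthonormal basis of the vectors of V vanishing at s,
  extended by the normalized residual of a vector v0 of V with v0 s \<noteq> 0, spans V, since
  v - (v s / v0 s) v0 vanishes at s.\<close>
lemma orthonormal_basis_extend:
  assumes V: "csubspace L d V" and "s \<in> C L d"
    and es: "orthonormal_list L d es" "set es \<subseteq> {v \<in> V. v s = 0}"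
      "\<forall>v\<in>V. v s = 0 \<longrightarrow> v = expansion L d es v"
    and v0: "v0 \<in> V" "v0 s \<noteq> 0"
  shows "\<exists>es'. orthonormal_list L d es' \<and> set es' \<subseteq> V \<and> (\<forall>v\<in>V. v = expansion L d es' v)"
proof -
  define r where "r = (\<lambda>c. v0 c - expansion L d es v0 c)"
  have rV: "r \<in> V"
    unfolding r_def using es(2) by (auto intro: csubspace_diff[OF V v0(1)] expansion_in_csubspace[OF V])
  have "\<forall>i<length es. (es!i) s = 0"
    using es(2) nth_mem by fastforce
  then have "r s \<noteq> 0"
    unfolding r_def expansion_def using v0(2) by simp
  then obtain k where k: "k \<noteq> 0" "inner L d (\<lambda>c. k * r c) (\<lambda>c. k * r c) = 1"
    using normalized_multiple_exists[where r=r] \<open>s \<in> C L d\<close> by blast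
  define e where "e = (\<lambda>c. k * r c)"
  have "inner L d (es!j) r = 0" if "j < length es" for j
    using orthonormal_list_inner_combination[OF es(1) that, of "\<lambda>i. inner L d (es!i) v0"]
    unfolding r_def expansion_def by (simp add: inner_diff_right)
  then have onl: "orthonormal_list L d (es @ [e])"
    using k(2) unfolding e_def by (intro orthonormal_list_snoc[OF es(1)]) (simp_all add: inner_scale_right)
  moreover have "set (es @ [e]) \<subseteq> V"
    using es(2) csubspace_scale[OF V rV] unfolding e_def by auto
  moreover have "v = expansion L d (es @ [e]) v" if v: "v \<in> V" for v
  proof -
    define t where "t = v s / v0 s"
    have "(\<lambda>c. v c - t * v0 c) = expansion L d es (\<lambda>c. v c - t * v0 c)"
      using es(3) v0 csubspace_diff[OF V v csubspace_scale[OF V v0(1)], of t]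
      unfolding t_def by simp
    then have "v = (\<lambda>c. expansion L d es v c + (t / k) * e c)"
      unfolding expansion_diff expansion_scale e_def r_def fun_eq_iff using k(1)
      by (simp add: algebra_simps)
    then show ?thesis
      by (rule expansion_snoc_eq[OF onl])
  qed
  ultimately show ?thesis by blast
qed

lemma orthonormal_basis_exists:
  assumes "finite S" "S \<subseteq> C L d" "csubspace L d V" "\<forall>v\<in>V. \<forall>c. c \<notin> S \<longrightarrow> v c = 0"
  shows "\<exists>es. orthonormal_list L d es \<and> set es \<subseteq> V \<and> (\<forall>v\<in>V. v = expansion L d es v)"
  using assms
proof (induction S arbitrary: V rule: finite_induct)
  case empty
  then show ?case
    by (intro exI[of _ "[]"]) (auto simp: orthonormal_list_def expansion_def)
next
  case (insert s S V)
  have "csubspace L d {v \<in> V. v s = 0}"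
    using insert.prems(2) unfolding csubspace_def by auto
  then obtain es where "orthonormal_list L d es" "set es \<subseteq> {v \<in> V. v s = 0}"
    "\<forall>v\<in>V. v s = 0 \<longrightarrow> v = expansion L d es v"
    using insert.IH insert.prems(1,3) by force
  then show ?case
    using orthonormal_basis_extend[OF insert.prems(2)] insert.prems(1) by (cases "\<forall>v\<in>V. v s = 0") auto
qed

lemma orth_proj_exists:
  assumes V: "csubspace L d V"
  shows "\<exists>P. is_orth_proj L d P V"
proof -
  have supp: "\<forall>v\<in>V. \<forall>c. c \<notin> C L d \<longrightarrow> v c = 0"
    using V by (auto simp: csubspace_def vspace_def)
  obtain es where es: "orthonormal_list L d es" "set es \<subseteq> V" "\<forall>v\<in>V. v = expansion L d es v"
    using orthonormal_basis_exists[OF finite_lattice_confs _ V supp] by auto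
  define n where "n = length es"
  define P where "P = (\<lambda>c c'. if c \<in> C L d \<and> c' \<in> C L d
    then \<Sum>i<n. (es!i) c * cnj ((es!i) c') else 0)"
  have app: "op_app L d P v = expansion L d es v" for v
  proof
    fix c
    show "op_app L d P v c = expansion L d es v c"
    proof (cases "c \<in> C L d")
      case True
      have "op_app L d P v c = (\<Sum>c'\<in>C L d. \<Sum>i<n. (es!i) c * cnj ((es!i) c') * v c')"
        using True by (simp add: op_app_def P_def sum_distrib_right)
      also have "\<dots> = (\<Sum>i<n. \<Sum>c'\<in>C L d. (es!i) c * cnj ((es!i) c') * v c')"
        by (rule sum.swap)
      also have "\<dots> = expansion L d es v c"
        by (simp add: expansion_def n_def inner_def sum_distrib_left mult_ac)
      finally show ?thesis .
    next
      case False
      then have "\<forall>i<n. (es!i) c = 0"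
        using es(2) supp nth_mem unfolding n_def by blast
      thus ?thesis using False by (simp add: op_app_def expansion_def n_def)
    qed
  qed
  have "is_orth_proj L d P V"
    unfolding is_orth_proj_def
  proof (intro conjI allI impI ballI)
    fix c c' assume "\<not> (c \<in> C L d \<and> c' \<in> C L d)"
    thus "P c c' = 0" unfolding P_def by auto
  next
    fix v
    show "op_app L d P v \<in> V"
      unfolding app by (rule expansion_in_csubspace[OF V es(2)])
  next
    fix v w assume "w \<in> V"
    have w: "w = expansion L d es w"
      using es(3) \<open>w \<in> V\<close> by blast
    have "inner L d w v = (\<Sum>i<n. cnj (inner L d (es!i) w) * inner L d (es!i) v)"
      by (subst w) (simp add: expansion_def n_def inner_sum_left)
    also have "\<dots> = inner L d w (expansion L d es v)"
      unfolding expansion_def n_def inner_sum_right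
      by (intro sum.cong refl) (metis inner_commute mult.commute)
    finally show "inner L d w (\<lambda>c. v c - op_app L d P v c) = 0"
      by (simp add: app inner_diff_right)
  qed
  thus ?thesis by blast
qed

lemma orth_proj_unique:
  assumes V: "csubspace L d V" and P1: "is_orth_proj L d P1 V" and P2: "is_orth_proj L d P2 V"
  shows "P1 = P2"
proof (rule op_eqI_basis_vec)
  show "op_zero_outside L d P1" "op_zero_outside L d P2"
    using P1 P2 by (simp_all add: is_orth_proj_def op_zero_outside_def)
next
  fix c' assume "c' \<in> C L d"
  define v where "v = basis_vec c'"
  have v: "v \<in> vspace L d" unfolding v_def by (rule basis_vec_in_vspace[OF \<open>c' \<in> C L d\<close>])
  define x where "x = (\<lambda>c. op_app L d P1 v c - op_app L d P2 v c)"
  have xV: "x \<in> V"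
    unfolding x_def using P1 P2 v by (intro csubspace_diff[OF V]) (auto simp: is_orth_proj_def)
  have "x = (\<lambda>c. (v c - op_app L d P2 v c) - (v c - op_app L d P1 v c))"
    unfolding x_def by auto
  then have "inner L d x x = inner L d x (\<lambda>c. v c - op_app L d P2 v c)
      - inner L d x (\<lambda>c. v c - op_app L d P1 v c)"
    by (simp only: inner_diff_right)
  also have "\<dots> = 0"
    using P1 P2 v xV by (simp add: is_orth_proj_def)
  finally have "x = (\<lambda>_. 0)"
    using csubspace_vspace[OF V xV] by (rule inner_self_eq_0_vspace)
  then show "op_app L d P1 (basis_vec c') = op_app L d P2 (basis_vec c')"
    unfolding x_def v_def by (simp add: fun_eq_iff)
qed

lemma is_orth_proj_orth_proj:
  assumes V: "csubspace L d V"
  shows "is_orth_proj L d (orth_proj L d V) V"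
proof -
  obtain P where P: "is_orth_proj L d P V"
    using orth_proj_exists[OF V] by blast
  show ?thesis
    unfolding orth_proj_def by (rule theI[of _ P]) (use P orth_proj_unique[OF V] in auto)
qed

locale orth_projector =
  fixes L :: nat and d :: "site \<Rightarrow> nat" and P :: op and V :: "vec set"
  assumes subspace: "csubspace L d V" and proj: "is_orth_proj L d P V"
begin

lemma op_app_in_range: "v \<in> vspace L d \<Longrightarrow> op_app L d P v \<in> V"
  using proj by (simp add: is_orth_proj_def)

lemma residual_orthogonal:
  "v \<in> vspace L d \<Longrightarrow> w \<in> V \<Longrightarrow> inner L d w (\<lambda>c. v c - op_app L d P v c) = 0"
  using proj by (simp add: is_orth_proj_def)

lemma zero_outside: "op_zero_outside L d P"
  using proj by (simp add: is_orth_proj_def op_zero_outside_def)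

lemma op_app_fixes_range:
  assumes v: "v \<in> V"
  shows "op_app L d P v = v"
proof -
  have vv: "v \<in> vspace L d" using csubspace_vspace[OF subspace v] .
  define x where "x = (\<lambda>c. v c - op_app L d P v c)"
  have "x \<in> V"
    unfolding x_def by (rule csubspace_diff[OF subspace v op_app_in_range[OF vv]])
  then have "inner L d x x = 0"
    unfolding x_def by (rule residual_orthogonal[OF vv])
  then have "x = (\<lambda>_. 0)"
    using csubspace_vspace[OF subspace \<open>x \<in> V\<close>] by (rule inner_self_eq_0_vspace)
  thus ?thesis unfolding x_def by (simp add: fun_eq_iff)
qed

lemma op_app_kills_orthogonal:
  assumes z: "z \<in> vspace L d" and orth: "\<forall>w\<in>V. inner L d w z = 0"
  shows "op_app L d P z = (\<lambda>_. 0)"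
proof -
  define y where "y = op_app L d P z"
  have yV: "y \<in> V" unfolding y_def by (rule op_app_in_range[OF z])
  have "inner L d y (\<lambda>c. z c - y c) = 0"
    unfolding y_def using residual_orthogonal[OF z yV[unfolded y_def]] .
  hence "inner L d y y = 0" using orth yV by (simp add: inner_diff_right)
  thus ?thesis
    unfolding y_def[symmetric] using csubspace_vspace[OF subspace yV] by (rule inner_self_eq_0_vspace)
qed

lemma inner_op_app_self_adjoint:
  assumes v: "v \<in> vspace L d" and w: "w \<in> vspace L d"
  shows "inner L d (op_app L d P w) v = inner L d w (op_app L d P v)"
proof -
  have "inner L d (op_app L d P w) v = inner L d (op_app L d P w) (op_app L d P v)"
    using residual_orthogonal[OF v op_app_in_range[OF w]] by (simp add: inner_diff_right)
  moreover have "inner L d (op_app L d P v) w = inner L d (op_app L d P v) (op_app L d P w)"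
    using residual_orthogonal[OF w op_app_in_range[OF v]] by (simp add: inner_diff_right)
  ultimately show ?thesis by (metis inner_commute)
qed

lemma hermitian: "hermitian L d P"
  unfolding hermitian_def
proof (intro ballI)
  fix c c' assume c: "c \<in> C L d" and c': "c' \<in> C L d"
  have "inner L d (op_app L d P (basis_vec c')) (basis_vec c)
      = inner L d (basis_vec c') (op_app L d P (basis_vec c))"
    by (rule inner_op_app_self_adjoint[OF basis_vec_in_vspace[OF c] basis_vec_in_vspace[OF c']])
  thus "P c' c = cnj (P c c')"
    using c c' by (simp add: inner_basis_vec_left inner_basis_vec_right op_app_basis_vec)
qed

lemma idempotent: "op_mult L d P P = P"
  by (rule op_eqI_basis_vec[OF op_zero_outside_op_mult zero_outside])
    (simp add: op_app_op_mult op_app_fixes_range op_app_in_range basis_vec_in_vspace)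

text \<open>Since T is self-adjoint, invariance of V under T gives invariance of its orthogonal
  complement too; hence T preserves the decomposition v = P v + (v - P v).\<close>
lemma commute_if_invariant:
  assumes T: "hermitian L d T" and TV: "\<forall>v\<in>V. op_app L d T v \<in> V"
  shows "op_mult L d T P = op_mult L d P T"
proof (rule op_eqI_basis_vec[OF op_zero_outside_op_mult op_zero_outside_op_mult])
  fix c' assume "c' \<in> C L d"
  define v where "v = basis_vec c'"
  have v: "v \<in> vspace L d" unfolding v_def by (rule basis_vec_in_vspace[OF \<open>c' \<in> C L d\<close>])
  define x where "x = op_app L d P v"
  define y where "y = (\<lambda>c. v c - x c)"
  have xV: "x \<in> V" unfolding x_def by (rule op_app_in_range[OF v])
  have Ty: "\<forall>w\<in>V. inner L d w (op_app L d T y) = 0"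
    using residual_orthogonal[OF v] TV
    by (simp add: hermitian_inner_op_app[OF T] y_def x_def)
  have "v = (\<lambda>c. x c + y c)"
    unfolding y_def by simp
  then have "op_app L d T v = (\<lambda>c. op_app L d T x c + op_app L d T y c)"
    by (simp add: op_app_add)
  then have "op_app L d P (op_app L d T v) = op_app L d T x"
    using op_app_fixes_range[of "op_app L d T x"] TV xV
      op_app_kills_orthogonal[OF op_app_in_vspace Ty]
    by (simp add: op_app_add)
  then show "op_app L d (op_mult L d T P) (basis_vec c') = op_app L d (op_mult L d P T) (basis_vec c')"
    by (simp add: op_app_op_mult x_def v_def)
qed

end

lemma orth_projector_Pgs: "orth_projector L d (Pgs L d G) (ground L d G)"
  unfolding orth_projector_def Pgs_def using csubspace_ground is_orth_proj_orth_proj by blast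

lemma orth_projector_Ploc: "orth_projector L d (Ploc L d G A) (op_kernel L d (G A))"
  unfolding orth_projector_def Ploc_def using csubspace_op_kernel is_orth_proj_orth_proj by blast

section \<open>The projector P_B\<close>

lemma hermitian_op_id: "hermitian L d (op_id L d)"
  by (auto simp: hermitian_def op_id_def)

lemma hermitian_op_mult_commuting:
  assumes "hermitian L d X" "hermitian L d Y" "op_mult L d X Y = op_mult L d Y X"
  shows "hermitian L d (op_mult L d X Y)"
  unfolding hermitian_def
proof (intro ballI)
  fix c c' assume c: "c \<in> C L d" and c': "c' \<in> C L d"
  have "cnj (op_mult L d X Y c c') = (\<Sum>e\<in>C L d. cnj (X c e) * cnj (Y e c'))"
    using c c' by (simp add: op_mult_def)
  also have "\<dots> = (\<Sum>e\<in>C L d. Y c' e * X e c)"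
  proof (intro sum.cong refl)
    fix e assume e: "e \<in> C L d"
    have "X e c = cnj (X c e)" "Y c' e = cnj (Y e c')"
      using assms(1,2) e c c' unfolding hermitian_def by blast+
    then show "cnj (X c e) * cnj (Y e c') = Y c' e * X e c"
      by (simp only: mult.commute)
  qed
  also have "\<dots> = op_mult L d Y X c' c"
    using c c' by (simp add: op_mult_def)
  finally show "op_mult L d X Y c' c = cnj (op_mult L d X Y c c')"
    using assms(3) by simp
qed

lemma op_kernel_invariant_if_commute:
  assumes "op_mult L d X Y = op_mult L d Y X" "v \<in> op_kernel L d X"
  shows "op_app L d Y v \<in> op_kernel L d X"
proof -
  have "op_app L d X (op_app L d Y v) = op_app L d Y (op_app L d X v)"
    by (metis assms(1) op_app_op_mult)
  also have "\<dots> = (\<lambda>_. 0)"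
    using assms(2) by (simp add: op_kernel_def op_app_zero)
  finally show ?thesis
    by (simp add: op_kernel_def op_app_in_vspace)
qed

text \<open>Commuting Hermitian operators have commuting kernel projectors: G_A' leaves the kernel
  of G_A invariant, so it commutes with P_A; then P_A leaves the kernel of G_A' invariant.\<close>
lemma Ploc_commute:
  assumes herm: "hermitian L d (G A)" "hermitian L d (G A')"
    and comm: "op_mult L d (G A) (G A') = op_mult L d (G A') (G A)"
  shows "op_mult L d (Ploc L d G A) (Ploc L d G A') = op_mult L d (Ploc L d G A') (Ploc L d G A)"
proof -
  interpret PA: orth_projector L d "Ploc L d G A" "op_kernel L d (G A)"
    by (rule orth_projector_Ploc)
  interpret PA': orth_projector L d "Ploc L d G A'" "op_kernel L d (G A')"
    by (rule orth_projector_Ploc)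
  have "op_mult L d (G A') (Ploc L d G A) = op_mult L d (Ploc L d G A) (G A')"
    using comm by (intro PA.commute_if_invariant[OF herm(2)] ballI op_kernel_invariant_if_commute)
  then show ?thesis
    by (intro PA'.commute_if_invariant[OF PA.hermitian] ballI op_kernel_invariant_if_commute)
qed

lemma foldr_op_mult_commuting_projections:
  assumes herm: "\<And>a. a \<in> S \<Longrightarrow> hermitian L d (F a)"
    and zero: "\<And>a. a \<in> S \<Longrightarrow> op_zero_outside L d (F a)"
    and idem: "\<And>a. a \<in> S \<Longrightarrow> op_mult L d (F a) (F a) = F a"
    and comm: "\<And>a b. a \<in> S \<Longrightarrow> b \<in> S \<Longrightarrow> op_mult L d (F a) (F b) = op_mult L d (F b) (F a)"
  shows "set xs \<subseteq> S \<Longrightarrow> (let R = foldr (op_mult L d) (map F xs) (op_id L d) in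
    hermitian L d R \<and> op_zero_outside L d R \<and> op_mult L d R R = R \<and>
    (\<forall>a\<in>S. op_mult L d (F a) R = op_mult L d R (F a)))"
proof (induction xs)
  case Nil
  show ?case
    using zero by (simp add: hermitian_op_id op_zero_outside_op_id op_mult_id_left op_mult_id_right)
next
  case (Cons x xs)
  let ?M = "op_mult L d"
  define R where "R = foldr ?M (map F xs) (op_id L d)"
  have x: "x \<in> S" using Cons.prems by simp
  have IH: "hermitian L d R" "?M R R = R" "\<And>a. a \<in> S \<Longrightarrow> ?M (F a) R = ?M R (F a)"
    using Cons by (auto simp: R_def Let_def)
  have "?M (F a) (?M (F x) R) = ?M (?M (F x) R) (F a)" if "a \<in> S" for a
    by (metis IH(3) that comm x op_mult_assoc)
  moreover have "?M (?M (F x) R) (?M (F x) R) = ?M (F x) R"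
  proof -
    have "?M (?M (F x) R) (?M (F x) R) = ?M (F x) (?M R (?M (F x) R))"
      by (simp add: op_mult_assoc)
    also have "?M R (?M (F x) R) = ?M (F x) (?M R R)"
      by (metis IH(3) x op_mult_assoc)
    also have "?M (F x) (?M (F x) (?M R R)) = ?M (F x) R"
      by (metis IH(2) idem x op_mult_assoc)
    finally show ?thesis .
  qed
  moreover have "hermitian L d (?M (F x) R)"
    by (rule hermitian_op_mult_commuting[OF herm[OF x] IH(1) IH(3)[OF x]])
  ultimately show ?case
    by (simp add: R_def[symmetric] Let_def op_zero_outside_op_mult)
qed

lemma finite_squares_subset:
  assumes "0 < L"
  shows "finite {A \<in> squares L 2. A \<subseteq> B}"
proof (rule finite_subset)
  show "{A \<in> squares L 2. A \<subseteq> B} \<subseteq> Pow (lattice L)"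
    using square_subset_lattice[OF assms] by (auto simp: squares_def)
qed (simp add: finite_lattice)

lemma PB_hermitian_idempotent:
  assumes L: "0 < L" and H: "H0_assms L d G"
  shows "hermitian L d (PB L d G B) \<and> op_mult L d (PB L d G B) (PB L d G B) = PB L d G B"
proof -
  define S where "S = {A \<in> squares L 2. A \<subseteq> B}"
  define xs where "xs = (SOME xs. distinct xs \<and> set xs = S)"
  obtain ys where "distinct ys \<and> set ys = S"
    using finite_distinct_list[OF finite_squares_subset[OF L]] unfolding S_def by blast
  then have "set xs = S"
    using someI[of "\<lambda>xs. distinct xs \<and> set xs = S"] unfolding xs_def by blast
  have hermG: "\<And>A. A \<in> S \<Longrightarrow> hermitian L d (G A)"
    and commG: "\<And>A A'. A \<in> S \<Longrightarrow> A' \<in> S \<Longrightarrow> op_mult L d (G A) (G A') = op_mult L d (G A') (G A)"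
    using H unfolding H0_assms_def psd_def S_def by auto
  have "let R = foldr (op_mult L d) (map (Ploc L d G) xs) (op_id L d) in
    hermitian L d R \<and> op_zero_outside L d R \<and> op_mult L d R R = R \<and>
    (\<forall>a\<in>S. op_mult L d (Ploc L d G a) R = op_mult L d R (Ploc L d G a))"
    by (rule foldr_op_mult_commuting_projections[OF
          orth_projector.hermitian[OF orth_projector_Ploc]
          orth_projector.zero_outside[OF orth_projector_Ploc]
          orth_projector.idempotent[OF orth_projector_Ploc]
          Ploc_commute[OF hermG hermG commG]])
      (simp_all add: \<open>set xs = S\<close>)
  then show ?thesis
    unfolding PB_def op_prod_def S_def[symmetric] xs_def[symmetric] by (simp add: Let_def)
qed

section \<open>Operators acting on a region\<close>

locale region =
  fixes L :: nat and d :: "site \<Rightarrow> nat" and A :: "site set"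
  assumes subset_lattice: "A \<subseteq> lattice L"
begin

abbreviation "Ac \<equiv> lattice L - A"

lemma merge_in_confs: "a \<in> confs d A \<Longrightarrow> g \<in> confs d Ac \<Longrightarrow> merge A a g \<in> C L d"
  unfolding confs_def merge_def using subset_lattice by auto

lemma restr_in_confs: "c \<in> C L d \<Longrightarrow> restr c A \<in> confs d A"
  unfolding confs_def restr_def using subset_lattice by auto

lemma restr_complement_in_confs: "c \<in> C L d \<Longrightarrow> restr c Ac \<in> confs d Ac"
  unfolding confs_def restr_def by auto

lemma merge_restr: "c \<in> C L d \<Longrightarrow> merge A (restr c A) (restr c Ac) = c"
  unfolding merge_def restr_def by (auto intro!: ext confs_outside)

lemma restr_merge: "a \<in> confs d A \<Longrightarrow> restr (merge A a g) A = a"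
  unfolding merge_def restr_def by (auto intro!: ext confs_outside)

lemma restr_merge_complement: "g \<in> confs d Ac \<Longrightarrow> restr (merge A a g) Ac = g"
  unfolding merge_def restr_def by (auto intro!: ext confs_outside)

lemma bij_betw_merge: "bij_betw (\<lambda>(a, g). merge A a g) (confs d A \<times> confs d Ac) (C L d)"
  by (rule bij_betw_byWitness[where f' = "\<lambda>c. (restr c A, restr c Ac)"])
    (auto simp: restr_merge restr_merge_complement merge_restr merge_in_confs
      restr_in_confs restr_complement_in_confs)

lemma finite_confs_complement: "finite (confs d Ac)"
  using finite_confs finite_lattice by blast

lemma sum_lattice_confs_split:
  "(\<Sum>c\<in>C L d. h c) = (\<Sum>a\<in>confs d A. \<Sum>g\<in>confs d Ac. h (merge A a g))"
proof -
  have "(\<Sum>c\<in>C L d. h c) = (\<Sum>ag\<in>confs d A \<times> confs d Ac. h ((\<lambda>(a, g). merge A a g) ag))"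
    by (rule sum.reindex_bij_betw[OF bij_betw_merge, symmetric])
  also have "\<dots> = (\<Sum>a\<in>confs d A. \<Sum>g\<in>confs d Ac. h (merge A a g))"
    by (simp add: sum.cartesian_product prod.case_distrib)
  finally show ?thesis .
qed

lemma merge_agree_outside_iff:
  "g \<in> confs d Ac \<Longrightarrow> g' \<in> confs d Ac \<Longrightarrow>
    (\<forall>u\<in>Ac. merge A a g u = merge A a' g' u) \<longleftrightarrow> g = g'"
  unfolding merge_def by (auto intro!: ext) (metis confs_outside)

end

text \<open>Op = f \<otimes> 1 acts on A. The vector local_adj_col a is the a-th column of f^*, so
  ptrace_local_adj_col reads Tr_Ac(X) f^* = Tr_Ac(X Op^*).\<close>
locale local_op = region +
  fixes Op :: op and f :: op
  assumes local: "\<And>c c'. c \<in> C L d \<Longrightarrow> c' \<in> C L d \<Longrightarrow>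
     Op c c' = (if \<forall>u\<in>Ac. c u = c' u then f (restr c A) (restr c' A) else 0)"
begin

lemma Op_merge:
  "a \<in> confs d A \<Longrightarrow> a' \<in> confs d A \<Longrightarrow> g \<in> confs d Ac \<Longrightarrow> g' \<in> confs d Ac \<Longrightarrow>
    Op (merge A a g) (merge A a' g') = (if g = g' then f a a' else 0)"
  by (simp add: local merge_in_confs merge_agree_outside_iff restr_merge)

definition local_adj_col :: "cfg \<Rightarrow> vec" where
  "local_adj_col a = (\<lambda>a''. if a'' \<in> confs d A then cnj (f a a'') else 0)"

lemma sum_Op_merge:
  assumes "a \<in> confs d A" "g \<in> confs d Ac"
  shows "(\<Sum>e\<in>C L d. Op (merge A a g) e * h e) = (\<Sum>a'\<in>confs d A. f a a' * h (merge A a' g))"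
proof -
  have "(\<Sum>e\<in>C L d. Op (merge A a g) e * h e)
      = (\<Sum>a'\<in>confs d A. \<Sum>g'\<in>confs d Ac. if g = g' then f a a' * h (merge A a' g) else 0)"
    unfolding sum_lattice_confs_split using assms by (intro sum.cong refl) (auto simp: Op_merge)
  also have "\<dots> = (\<Sum>a'\<in>confs d A. f a a' * h (merge A a' g))"
    using assms(2) finite_confs_complement by simp
  finally show ?thesis .
qed

lemma op_mult_adj_merge:
  assumes "a \<in> confs d A" "g \<in> confs d Ac" "c' \<in> C L d"
  shows "op_mult L d X (op_adj Op) c' (merge A a g)
    = (\<Sum>a''\<in>confs d A. X c' (merge A a'' g) * cnj (f a a''))"
proof -
  have "op_mult L d X (op_adj Op) c' (merge A a g)
      = cnj (\<Sum>e\<in>C L d. Op (merge A a g) e * cnj (X c' e))"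
    using assms by (simp add: op_mult_def op_adj_def merge_in_confs mult.commute)
  also have "\<dots> = (\<Sum>a''\<in>confs d A. X c' (merge A a'' g) * cnj (f a a''))"
    unfolding sum_Op_merge[OF assms(1,2)] by (simp add: mult.commute)
  finally show ?thesis .
qed

lemma ptrace_local_adj_col:
  assumes a: "a \<in> confs d A" and a': "a' \<in> confs d A"
  shows "(\<Sum>a''\<in>confs d A. ptrace L d A X a' a'' * local_adj_col a a'')
    = (\<Sum>g\<in>confs d Ac. op_mult L d X (op_adj Op) (merge A a' g) (merge A a g))"
proof -
  have "(\<Sum>a''\<in>confs d A. ptrace L d A X a' a'' * local_adj_col a a'') =
        (\<Sum>a''\<in>confs d A. \<Sum>g\<in>confs d Ac. X (merge A a' g) (merge A a'' g) * cnj (f a a''))"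
    using a' by (intro sum.cong refl) (simp add: ptrace_def local_adj_col_def sum_distrib_right)
  also have "\<dots> = (\<Sum>g\<in>confs d Ac. \<Sum>a''\<in>confs d A. X (merge A a' g) (merge A a'' g) * cnj (f a a''))"
    by (rule sum.swap)
  also have "\<dots> = (\<Sum>g\<in>confs d Ac. op_mult L d X (op_adj Op) (merge A a' g) (merge A a g))"
    using a a' by (intro sum.cong refl) (simp add: op_mult_adj_merge merge_in_confs)
  finally show ?thesis .
qed

lemma local_adj_col_in_ptrace_kernel:
  assumes "op_mult L d X (op_adj Op) = (\<lambda>_ _. 0)" "a \<in> confs d A"
  shows "local_adj_col a \<in> loc_kernel d A (ptrace L d A X)"
  unfolding loc_kernel_def
  using ptrace_local_adj_col[OF assms(2)] assms(1) by (simp add: local_adj_col_def)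

text \<open>Conversely, for a projector Q: summing |Q Op^* e_c|^2 over the configurations c that
  agree with a on A gives (f Tr_Ac(Q) f^*)(a,a), which vanishes when the columns of f^*
  lie in the kernel of Tr_Ac(Q).\<close>
lemma sum_norm_projector_adj_cols:
  assumes herm: "hermitian L d Q" and idem: "op_mult L d Q Q = Q" and a: "a \<in> confs d A"
  defines "u \<equiv> \<lambda>c e. cnj (Op c e)"
  shows "(\<Sum>g\<in>confs d Ac. inner L d (op_app L d Q (u (merge A a g))) (op_app L d Q (u (merge A a g))))
    = (\<Sum>a'\<in>confs d A. f a a' * (\<Sum>a''\<in>confs d A. ptrace L d A Q a' a'' * local_adj_col a a''))"
proof -
  have "inner L d (op_app L d Q (u c)) (op_app L d Q (u c)) = inner L d (u c) (op_app L d Q (u c))"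
    for c
    by (metis hermitian_inner_op_app[OF herm] op_app_op_mult idem)
  also have "inner L d (u c) (op_app L d Q (u c)) = (\<Sum>e\<in>C L d. Op c e * op_mult L d Q (op_adj Op) e c)"
    if "c \<in> C L d" for c
    using that unfolding inner_def
    by (intro sum.cong refl) (simp add: u_def op_app_def op_mult_def op_adj_def)
  finally have "(\<Sum>g\<in>confs d Ac. inner L d (op_app L d Q (u (merge A a g))) (op_app L d Q (u (merge A a g))))
      = (\<Sum>g\<in>confs d Ac. \<Sum>a'\<in>confs d A. f a a' * op_mult L d Q (op_adj Op) (merge A a' g) (merge A a g))"
    using a by (intro sum.cong refl) (simp add: merge_in_confs sum_Op_merge)
  also have "\<dots> = (\<Sum>a'\<in>confs d A. f a a' * (\<Sum>a''\<in>confs d A. ptrace L d A Q a' a'' * local_adj_col a a''))"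
    using a by (simp add: sum.swap[of _ "confs d Ac"] sum_distrib_left ptrace_local_adj_col)
  finally show ?thesis .
qed

lemma op_mult_adj_eq_0_if_local_adj_cols_in_kernel:
  assumes herm: "hermitian L d Q" and idem: "op_mult L d Q Q = Q"
    and ker: "\<And>a. a \<in> confs d A \<Longrightarrow> local_adj_col a \<in> loc_kernel d A (ptrace L d A Q)"
  shows "op_mult L d Q (op_adj Op) = (\<lambda>_ _. 0)"
proof (intro ext)
  fix c' c
  show "op_mult L d Q (op_adj Op) c' c = 0"
  proof (cases "c \<in> C L d \<and> c' \<in> C L d")
    case True
    define u where "u = (\<lambda>c e. cnj (Op c e))"
    define a where "a = restr c A"
    have a: "a \<in> confs d A" and c: "c = merge A a (restr c Ac)"
      using True by (simp_all add: a_def restr_in_confs merge_restr)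
    let ?n = "\<lambda>g. \<Sum>e\<in>C L d. (cmod (op_app L d Q (u (merge A a g)) e))\<^sup>2"
    have "(\<Sum>g\<in>confs d Ac. inner L d (op_app L d Q (u (merge A a g))) (op_app L d Q (u (merge A a g))))
        = 0"
      using sum_norm_projector_adj_cols[OF herm idem a] ker[OF a]
      unfolding loc_kernel_def u_def by simp
    then have "complex_of_real (\<Sum>g\<in>confs d Ac. ?n g) = 0"
      by (simp only: inner_self of_real_sum)
    then have "?n (restr c Ac) = 0"
      using True finite_confs_complement
      by (simp only: of_real_eq_0_iff sum_nonneg_eq_0_iff sum_nonneg zero_le_power2
          restr_complement_in_confs)
    then have "op_app L d Q (u c) c' = 0"
      using True c by (intro inner_self_eq_0_imp[of L d "op_app L d Q (u c)"])
        (simp_all add: inner_self)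
    then show ?thesis
      using True by (simp add: op_app_def op_mult_def op_adj_def u_def)
  qed (auto simp: op_mult_def)
qed

end

theorem corollary1:
  fixes L :: nat and d :: "site \<Rightarrow> nat" and G :: "site set \<Rightarrow> op"
    and c :: real and Lstar :: nat and r :: nat and x y :: int and OA :: op
  assumes "0 < L"
    and "H0_assms L d G"
    and "0 < c" and "real Lstar \<ge> c * real L"
    and "TQO2 L d G Lstar"
    and "1 \<le> r" and "r \<le> Lstar"
    and "acts_on L d (square L x y r) OA"
    and "op_mult L d OA (Pgs L d G) = (\<lambda>_ _. 0)"
  shows "op_mult L d OA (PB L d G (square L (x - 1) (y - 1) (r + 2))) = (\<lambda>_ _. 0)"
proof -
  let ?A = "square L x y r"
  let ?Q = "PB L d G (square L (x - 1) (y - 1) (r + 2))"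
  obtain f where "\<forall>c\<in>C L d. \<forall>c'\<in>C L d.
      OA c c' = (if \<forall>u\<in>lattice L - ?A. c u = c' u then f (restr c ?A) (restr c' ?A) else 0)"
    using assms(8) unfolding acts_on_def by blast
  then interpret local_op L d ?A OA f
    by unfold_locales (use square_subset_lattice[OF assms(1)] in auto)
  have Q: "hermitian L d ?Q" "op_mult L d ?Q ?Q = ?Q"
    using PB_hermitian_idempotent[OF assms(1,2)] by auto
  have "op_mult L d (Pgs L d G) (op_adj OA) = (\<lambda>_ _. 0)"
    using assms(9) hermitian_op_mult_eq_0_iff_adj[OF orth_projector.hermitian[OF orth_projector_Pgs]]
    by blast
  then have "local_adj_col a \<in> loc_kernel d ?A (ptrace L d ?A ?Q)" if "a \<in> confs d ?A" for a
    using local_adj_col_in_ptrace_kernel[OF _ that] assms(5-7) unfolding TQO2_def by blast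
  then have "op_mult L d ?Q (op_adj OA) = (\<lambda>_ _. 0)"
    by (rule op_mult_adj_eq_0_if_local_adj_cols_in_kernel[OF Q])
  then show ?thesis
    using hermitian_op_mult_eq_0_iff_adj[OF Q(1)] by blast
qed

end
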